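(* Let $\alpha>1$ and $D,R_{tot},L_0>0$. Let $(k_{nf}^0,k_{pf}^0)$ and $(k_{nf}^1,k_{pf}^1)$ be two pairs of positive parameters, and suppose a function $R\in C^2([-L_0,L_0])$ that is positive on $(-L_0,L_0)$ and not constant solves $$-D R''(x)=-k_{nf}R(x)+k_{pf}R(x)^{\alpha}\Big(1-\frac{1}{R_{tot}}\int_{-L_0}^{L_0}R(s)\,ds\Big),\qquad R(\pm L_0)=0,$$ both for $(k_{nf},k_{pf})=(k_{nf}^0,k_{pf}^0)$ and for $(k_{nf},k_{pf})=(k_{nf}^1,k_{pf}^1)$, with $\int_{-L_0}^{L_0}R<R_{tot}$. Then $k_{nf}^0=k_{nf}^1$ and $k_{pf}^0=k_{pf}^1$.
   Context: All constants are fixed and positive, with $\alpha>1$. *)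

theory Defs
  imports "HOL-Analysis.Analysis"
begin

definition C2_on :: "real \<Rightarrow> real \<Rightarrow> (real \<Rightarrow> real) \<Rightarrow> bool" where
  "C2_on a b R \<longleftrightarrow> (\<exists>R1 R2.
      (\<forall>x\<in>{a..b}. (R has_real_derivative R1 x) (at x within {a..b})) \<and>
      (\<forall>x\<in>{a..b}. (R1 has_real_derivative R2 x) (at x within {a..b})) \<and>
      continuous_on {a..b} R2)"

definition solves_bvp ::
  "real \<Rightarrow> real \<Rightarrow> real \<Rightarrow> real \<Rightarrow> real \<Rightarrow> real \<Rightarrow> (real \<Rightarrow> real) \<Rightarrow> bool" where
  "solves_bvp \<alpha> D Rtot L0 knf kpf R \<longleftrightarrow> (\<exists>R1 R2.
      (\<forall>x\<in>{-L0..L0}. (R has_real_derivative R1 x) (at x within {-L0..L0})) \<and>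
      (\<forall>x\<in>{-L0..L0}. (R1 has_real_derivative R2 x) (at x within {-L0..L0})) \<and>
      (\<forall>x\<in>{-L0..L0}. - D * R2 x =
          - knf * R x + kpf * (R x powr \<alpha>) * (1 - integral {-L0..L0} R / Rtot)) \<and>
      R (-L0) = 0 \<and> R L0 = 0)"

end

theory Submission
  imports Defs
begin

text \<open>Both parameter pairs act on the same profile R, so subtracting the two equations
  eliminates R'' and leaves (knf1 - knf0) R = (kpf1 - kpf0) c R^\<alpha> on the open interval,
  with c = 1 - \<integral>R / Rtot > 0. Since R vanishes at the ends and is positive inside, it takes
  two different positive values there; as \<alpha> \<noteq> 1 the functions r and r^\<alpha> are then linearly
  independent on these two values, so both coefficients vanish.\<close>

lemma has_real_derivative_within_interval_eq:
  fixes f g f' g' :: "real \<Rightarrow> real"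
  assumes "\<forall>x\<in>{a..b}. (f has_real_derivative f' x) (at x within {a..b})"
    and "\<forall>x\<in>{a..b}. (g has_real_derivative g' x) (at x within {a..b})"
    and "\<forall>x\<in>{a<..<b}. f x = g x"
    and x: "x \<in> {a<..<b}"
  shows "f' x = g' x"
proof -
  have at_x: "at x within {a..b} = at x"
    using x by (intro at_within_interior) simp
  have "(f has_real_derivative f' x) (at x)" "(g has_real_derivative g' x) (at x)"
    using assms(1,2) x at_x by (metis greaterThanLessThan_subseteq_atLeastAtMost_iff order_refl subsetD)+
  moreover from this(1) have "(g has_real_derivative f' x) (at x)"
    by (rule has_field_derivative_transform_within_open[where S = "{a<..<b}"])
       (use x assms(3) in auto)
  ultimately show ?thesis
    using DERIV_unique by blast
qed

lemma solves_bvp_parameter_identity: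
  assumes "solves_bvp \<alpha> D Rtot L0 knf0 kpf0 R" "solves_bvp \<alpha> D Rtot L0 knf1 kpf1 R"
    and "x \<in> {-L0<..<L0}"
  shows "(knf1 - knf0) * R x
           = ((kpf1 - kpf0) * (1 - integral {-L0..L0} R / Rtot)) * R x powr \<alpha>"
proof -
  obtain A1 A2 where A1: "\<forall>x\<in>{-L0..L0}. (R has_real_derivative A1 x) (at x within {-L0..L0})"
    and A2: "\<forall>x\<in>{-L0..L0}. (A1 has_real_derivative A2 x) (at x within {-L0..L0})"
    and A_eq: "\<forall>x\<in>{-L0..L0}. - D * A2 x
                 = - knf0 * R x + kpf0 * (R x powr \<alpha>) * (1 - integral {-L0..L0} R / Rtot)"
    using assms(1) unfolding solves_bvp_def by blast
  obtain B1 B2 where B1: "\<forall>x\<in>{-L0..L0}. (R has_real_derivative B1 x) (at x within {-L0..L0})"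
    and B2: "\<forall>x\<in>{-L0..L0}. (B1 has_real_derivative B2 x) (at x within {-L0..L0})"
    and B_eq: "\<forall>x\<in>{-L0..L0}. - D * B2 x
                 = - knf1 * R x + kpf1 * (R x powr \<alpha>) * (1 - integral {-L0..L0} R / Rtot)"
    using assms(2) unfolding solves_bvp_def by blast
  have "\<forall>x\<in>{-L0<..<L0}. A1 x = B1 x"
    using has_real_derivative_within_interval_eq[OF A1 B1] by blast
  then have "A2 x = B2 x"
    using has_real_derivative_within_interval_eq[OF A2 B2] assms(3) by blast
  moreover have "x \<in> {-L0..L0}"
    using assms(3) by simp
  ultimately have "- knf0 * R x + kpf0 * (R x powr \<alpha>) * (1 - integral {-L0..L0} R / Rtot)
      = - knf1 * R x + kpf1 * (R x powr \<alpha>) * (1 - integral {-L0..L0} R / Rtot)"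
    using A_eq B_eq by metis
  then show ?thesis
    by (simp add: algebra_simps diff_divide_distrib)
qed

lemma linear_eq_powr_at_two_points_imp_zero:
  fixes a b r s \<alpha> :: real
  assumes "a * r = b * r powr \<alpha>" "a * s = b * s powr \<alpha>"
    and "0 < r" "0 < s" "r \<noteq> s" "\<alpha> \<noteq> 1"
  shows "a = 0 \<and> b = 0"
proof -
  have "a = b * r powr (\<alpha> - 1)" "a = b * s powr (\<alpha> - 1)"
    using assms(1-4) by (auto simp: powr_diff field_simps)
  moreover have "r powr (\<alpha> - 1) \<noteq> s powr (\<alpha> - 1)"
  proof
    assume "r powr (\<alpha> - 1) = s powr (\<alpha> - 1)"
    then have "(\<alpha> - 1) * ln r = (\<alpha> - 1) * ln s"
      using assms(3,4) by (metis ln_powr)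
    then show False
      using assms(3-6) by simp
  qed
  ultimately have "b = 0"
    by auto
  with \<open>a = b * r powr (\<alpha> - 1)\<close> show ?thesis
    by simp
qed

lemma interior_point_with_half_value:
  fixes f :: "real \<Rightarrow> real"
  assumes "continuous_on {a..b} f" "\<forall>x\<in>{a<..<b}. 0 < f x" "f b = 0" "c \<in> {a<..<b}"
  obtains y where "y \<in> {a<..<b}" "f y = f c / 2"
proof -
  have "f c > 0"
    using assms(2,4) by blast
  have "continuous_on {c..b} f"
    by (rule continuous_on_subset[OF assms(1)]) (use assms(4) in auto)
  then obtain y where y: "c \<le> y" "y \<le> b" "f y = f c / 2"
    using IVT2'[of f b "f c / 2" c] assms(3,4) \<open>f c > 0\<close> by auto
  moreover have "y \<noteq> b"
    using y(3) assms(3) \<open>f c > 0\<close> by auto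
  ultimately show thesis
    using assms(4) by (intro that[of y]) auto
qed

lemma solves_bvp_continuous:
  assumes "solves_bvp \<alpha> D Rtot L0 knf kpf R"
  shows "continuous_on {-L0..L0} R"
  using assms unfolding solves_bvp_def
  by (metis DERIV_continuous continuous_on_eq_continuous_within)

theorem mainTheorem6:
  fixes \<alpha> D Rtot L0 knf0 kpf0 knf1 kpf1 :: real and R :: "real \<Rightarrow> real"
  assumes "\<alpha> > 1" and "D > 0" and "Rtot > 0" and "L0 > 0"
    and "knf0 > 0" and "kpf0 > 0" and "knf1 > 0" and "kpf1 > 0"
    and "C2_on (-L0) L0 R"
    and "\<forall>x\<in>{-L0<..<L0}. R x > 0"
    and "\<exists>x\<in>{-L0..L0}. \<exists>y\<in>{-L0..L0}. R x \<noteq> R y"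
    and "solves_bvp \<alpha> D Rtot L0 knf0 kpf0 R"
    and "solves_bvp \<alpha> D Rtot L0 knf1 kpf1 R"
    and "integral {-L0..L0} R < Rtot"
  shows "knf0 = knf1 \<and> kpf0 = kpf1"
proof -
  define c where "c = 1 - integral {-L0..L0} R / Rtot"
  have "c > 0"
    using assms(3,14) by (simp add: c_def field_simps)
  have zero_inside: "0 \<in> {-L0<..<L0}"
    using assms(4) by simp
  obtain y where y: "y \<in> {-L0<..<L0}" "R y = R 0 / 2"
    using interior_point_with_half_value[OF solves_bvp_continuous[OF assms(12)]
        assms(10) _ zero_inside] assms(12)
    unfolding solves_bvp_def by blast
  have "R 0 > 0"
    using assms(10) zero_inside by blast
  have identity: "(knf1 - knf0) * R x = ((kpf1 - kpf0) * c) * R x powr \<alpha>"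
    if "x \<in> {-L0<..<L0}" for x
    using solves_bvp_parameter_identity[OF assms(12,13) that] by (simp add: c_def)
  have "knf1 - knf0 = 0 \<and> (kpf1 - kpf0) * c = 0"
  proof (rule linear_eq_powr_at_two_points_imp_zero)
    show "(knf1 - knf0) * R 0 = (kpf1 - kpf0) * c * R 0 powr \<alpha>"
      using identity[OF zero_inside] .
    show "(knf1 - knf0) * R y = (kpf1 - kpf0) * c * R y powr \<alpha>"
      using identity[OF y(1)] .
  qed (use \<open>R 0 > 0\<close> y(2) assms(1) in auto)
  with \<open>c > 0\<close> show ?thesis
    by simp
qed

end
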